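(* If $\Gamma\vdash^k t:\sigma$ is derivable in $\cap J$, then $t\in SN_{d\beta}$ and $\|t\|_{d\beta}\le k$, where $\|t\|_{d\beta}$ is the maximal length of a $\to_{d\beta}$-reduction sequence starting at $t$.
   Context: Terms $\mathtt T_J$: $t,u,r ::= x \mid \lambda x.t \mid t(u,y.r)$ ($y$ bound in $r$), up to $\alpha$-equivalence; $\{u/x\}t$ capture-avoiding substitution. List contexts $\mathtt D ::= \Diamond \mid t(u,y.\mathtt D)$. Distant beta: $\mathtt D\langle\lambda x.t\rangle(u,y.r) \mapsto_{d\beta} \{\{u/x\}\mathtt D\langle t\rangle/y\}r$ (variables bound by $\mathtt D$ not free in $u$, $x$ not in $\mathtt D$), $\to_{d\beta}$ its closure under all contexts; $SN_{d\beta}$ the set of terms with no infinite $\to_{d\beta}$-sequence. System $\cap J$: types $\sigma,\tau ::= \alpha \mid \mathcal M\to\sigma$, $\mathcal M=[\sigma_i]_{i\in I}$ a finite possibly empty multiset; $\sqcup$ multiset union; environments map variables to multisets, $\wedge$ pointwise union, $\Gamma;x:\mathcal M$ extension with $x\notin\mathrm{dom}\,\Gamma$. $\mathrm{ch}(\mathcal M)=\mathcal M$ if $\mathcal M\ne[\,]$, $\mathrm{ch}([\,])=[\tau]$ for an arbitrary $\tau$. Rules: (var) $x:[\sigma]\vdash x:\sigma$; (abs) from $\Gamma;x:\mathcal M\vdash t:\sigma$ infer $\Gamma\vdash\lambda x.t:\mathcal M\to\sigma$; (many) from $(\Gamma_i\vdash t:\sigma_i)_{i\in I}$, $I\ne\emptyset$,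 infer $\wedge_i\Gamma_i\vdash t:[\sigma_i]_{i\in I}$; (app) from $\Gamma\vdash t:\mathrm{ch}([\mathcal M_i\to\tau_i]_{i\in I})$, $\Delta\vdash u:\mathrm{ch}(\sqcup_i\mathcal M_i)$, $\Lambda;y:[\tau_i]_{i\in I}\vdash r:\sigma$ infer $\Gamma\wedge\Delta\wedge\Lambda\vdash t(u,y.r):\sigma$. $\vdash^k$ indicates a derivation of size $k$ = number of rule instances other than (many). *)

theory Defs
  imports "HOL-Library.Multiset" "HOL-Library.Extended_Nat"
begin

text \<open>Terms of Lambda-J in de Bruijn representation (terms up to alpha-equivalence).
  App t u r is t(u, y.r), where y is bound (index 0) in r.\<close>
datatype trm = Var nat | Lam trm | App trm trm trm

fun lift :: "nat \<Rightarrow> trm \<Rightarrow> trm" where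
  "lift k (Var i) = (if i < k then Var i else Var (Suc i))"
| "lift k (Lam t) = Lam (lift (Suc k) t)"
| "lift k (App t u r) = App (lift k t) (lift k u) (lift (Suc k) r)"

text \<open>subst t k s: capture-avoiding substitution of s for index k in t
  (indices above k are decremented, since the binder of k disappears).\<close>
fun subst :: "trm \<Rightarrow> nat \<Rightarrow> trm \<Rightarrow> trm" where
  "subst (Var i) k s = (if i < k then Var i else if i = k then s else Var (i - 1))"
| "subst (Lam t) k s = Lam (subst t (Suc k) (lift 0 s))"
| "subst (App t u r) k s = App (subst t k s) (subst u k s) (subst r (Suc k) (lift 0 s))"

datatype ctx = Hole | CApp trm trm ctx

fun plug :: "ctx \<Rightarrow> trm \<Rightarrow> trm" where
  "plug Hole s = s"
| "plug (CApp t u D) s = App t u (plug D s)"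

fun depth :: "ctx \<Rightarrow> nat" where
  "depth Hole = 0"
| "depth (CApp t u D) = Suc (depth D)"

text \<open>Distant beta: D<\<lambda>x.t>(u,y.r) \<mapsto> {{u/x}D<t>/y}r, closed under all contexts.
  The side conditions on variable names are automatic with de Bruijn indices:
  u is lifted over the binders of D.\<close>
inductive dbeta :: "trm \<Rightarrow> trm \<Rightarrow> bool" where
  root: "dbeta (App (plug D (Lam t)) u r)
               (subst r 0 (plug D (subst t 0 ((lift 0 ^^ depth D) u))))"
| lam: "dbeta t t' \<Longrightarrow> dbeta (Lam t) (Lam t')"
| app1: "dbeta t t' \<Longrightarrow> dbeta (App t u r) (App t' u r)"
| app2: "dbeta u u' \<Longrightarrow> dbeta (App t u r) (App t u' r)"
| app3: "dbeta r r' \<Longrightarrow> dbeta (App t u r) (App t u r')"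

definition SN_dbeta :: "trm set" where
  "SN_dbeta = {t. \<not> (\<exists>f. f 0 = t \<and> (\<forall>i. dbeta (f i) (f (Suc i))))}"

definition dnorm :: "trm \<Rightarrow> enat" where
  "dnorm t = Sup {enat n | n. \<exists>t'. (dbeta ^^ n) t t'}"

datatype ty = TVar nat | Arr "ty multiset" ty

type_synonym env = "nat \<Rightarrow> ty multiset"

definition env_union :: "env \<Rightarrow> env \<Rightarrow> env" (infixl "\<and>\<^sub>e" 70) where
  "\<Gamma> \<and>\<^sub>e \<Delta> = (\<lambda>x. \<Gamma> x + \<Delta> x)"

definition env_ext :: "ty multiset \<Rightarrow> env \<Rightarrow> env" where
  "env_ext M \<Gamma> = (\<lambda>x. case x of 0 \<Rightarrow> M | Suc y \<Rightarrow> \<Gamma> y)"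

definition single_env :: "nat \<Rightarrow> ty \<Rightarrow> env" where
  "single_env x \<sigma> = (\<lambda>y. if y = x then {#\<sigma>#} else {#})"

definition ch :: "ty multiset \<Rightarrow> ty \<Rightarrow> ty multiset" where
  "ch M \<tau> = (if M = {#} then {#\<tau>#} else M)"

text \<open>System cap-J with derivation size k (rule instances other than (many)).
  typing G t s k :  G |-^k t : s ;   mtyping G t M k : G |-^k t : M (rule many).\<close>
inductive typing :: "env \<Rightarrow> trm \<Rightarrow> ty \<Rightarrow> nat \<Rightarrow> bool"
  and mtyping :: "env \<Rightarrow> trm \<Rightarrow> ty multiset \<Rightarrow> nat \<Rightarrow> bool" where
  var: "typing (single_env x \<sigma>) (Var x) \<sigma> 1"
| abs: "typing (env_ext M \<Gamma>) t \<sigma> k \<Longrightarrow> typing \<Gamma> (Lam t) (Arr M \<sigma>) (Suc k)"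
| many_one: "typing \<Gamma> t \<sigma> k \<Longrightarrow> mtyping \<Gamma> t {#\<sigma>#} k"
| many_add: "typing \<Gamma> t \<sigma> k \<Longrightarrow> mtyping \<Delta> t M m \<Longrightarrow> mtyping (\<Gamma> \<and>\<^sub>e \<Delta>) t (add_mset \<sigma> M) (k + m)"
| app: "mtyping \<Gamma> t (ch (image_mset (\<lambda>(M, \<tau>). Arr M \<tau>) A) \<tau>0) k1 \<Longrightarrow>
        mtyping \<Delta> u (ch (sum_mset (image_mset fst A)) \<tau>1) k2 \<Longrightarrow>
        typing (env_ext (image_mset snd A) \<Lambda>) r \<sigma> k3 \<Longrightarrow>
        typing (\<Gamma> \<and>\<^sub>e \<Delta> \<and>\<^sub>e \<Lambda>) (App t u r) \<sigma> (Suc (k1 + k2 + k3))"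

end

theory Submission
  imports Defs "HOL-Library.Function_Algebras"
begin

text \<open>Every \<open>d\<beta>\<close>-step strictly decreases the size of a typing derivation, so a term typable
  with size \<open>k\<close> has no reduction sequence longer than \<open>k\<close>. An erasing step throws typed
  subterms away, possibly below a \<open>\<lambda>\<close>, so environments and abstraction types cannot be
  kept exactly along reduction: subject reduction is proved for an affine variant of \<open>\<cap>J\<close>,
  which absorbs weakening into its axioms and union rules and into which \<open>\<cap>J\<close> embeds.
  The decrease comes from the substitution lemma: substituting for \<open>x\<close> a term typed with
  the multiset \<open>\<Gamma>(x)\<close> costs at most the sum of both sizes minus \<open>|\<Gamma>(x)|\<close>, and contracting
  a redex also removes its (app) rule and the (abs) rules of the abstraction.\<close>

definition env_le :: "env \<Rightarrow> env \<Rightarrow> bool" (infix "\<sqsubseteq>" 50) where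
  "\<Gamma> \<sqsubseteq> \<Delta> \<longleftrightarrow> (\<forall>x. \<Gamma> x \<subseteq># \<Delta> x)"

text \<open>\<open>shift_env k\<close> and \<open>drop_env k\<close> act on environments as \<open>lift k\<close> and \<open>subst _ k\<close>
  act on the free indices of terms.\<close>

definition shift_env :: "nat \<Rightarrow> env \<Rightarrow> env" where
  "shift_env k \<Gamma> = (\<lambda>i. if i < k then \<Gamma> i else if i = k then {#} else \<Gamma> (i - 1))"

definition drop_env :: "nat \<Rightarrow> env \<Rightarrow> env" where
  "drop_env k \<Gamma> = (\<lambda>i. if i < k then \<Gamma> i else \<Gamma> (Suc i))"

lemma env_union_eq_plus: "\<Gamma> \<and>\<^sub>e \<Delta> = \<Gamma> + \<Delta>"
  by (simp add: env_union_def plus_fun_def)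

lemma env_leD: "\<Gamma> \<sqsubseteq> \<Delta> \<Longrightarrow> \<Gamma> x \<subseteq># \<Delta> x"
  by (simp add: env_le_def)

lemma env_le_refl [simp]: "\<Gamma> \<sqsubseteq> \<Gamma>"
  by (simp add: env_le_def)

lemma env_le_trans: "\<Gamma> \<sqsubseteq> \<Delta> \<Longrightarrow> \<Delta> \<sqsubseteq> \<Theta> \<Longrightarrow> \<Gamma> \<sqsubseteq> \<Theta>"
  unfolding env_le_def by (meson subset_mset.order_trans)

lemma env_le_add_mono: "\<Gamma> \<sqsubseteq> \<Gamma>' \<Longrightarrow> \<Delta> \<sqsubseteq> \<Delta>' \<Longrightarrow> \<Gamma> + \<Delta> \<sqsubseteq> \<Gamma>' + \<Delta>'"
  by (simp add: env_le_def subset_mset.add_mono)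

lemma env_le_add_left [simp]: "\<Gamma> \<sqsubseteq> \<Gamma> + \<Delta>"
  and env_le_add_right [simp]: "\<Delta> \<sqsubseteq> \<Gamma> + \<Delta>"
  by (simp_all add: env_le_def)

lemma env_le_add_leftD: "\<Gamma> + \<Delta> \<sqsubseteq> \<Theta> \<Longrightarrow> \<Gamma> \<sqsubseteq> \<Theta>"
  by (meson env_le_add_left env_le_trans)

lemma env_le_add_trans: "\<Delta>' \<sqsubseteq> \<Delta> \<Longrightarrow> \<Gamma> + \<Delta> \<sqsubseteq> \<Theta> \<Longrightarrow> \<Gamma> + \<Delta>' \<sqsubseteq> \<Theta>"
  by (meson env_le_add_mono env_le_refl env_le_trans)

lemma env_ext_mono: "\<Gamma> \<sqsubseteq> \<Delta> \<Longrightarrow> env_ext M \<Gamma> \<sqsubseteq> env_ext M \<Delta>"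
  by (simp add: env_le_def env_ext_def split: nat.split)

lemma env_ext_0 [simp]: "env_ext M \<Gamma> 0 = M"
  and env_ext_Suc [simp]: "env_ext M \<Gamma> (Suc i) = \<Gamma> i"
  by (simp_all add: env_ext_def)

lemma env_ext_add_shift_env_0: "env_ext M \<Gamma> + shift_env 0 \<Delta> = env_ext M (\<Gamma> + \<Delta>)"
  by (simp add: fun_eq_iff shift_env_def env_ext_def split: nat.split)

lemma shift_env_add: "shift_env k (\<Gamma> + \<Delta>) = shift_env k \<Gamma> + shift_env k \<Delta>"
  by (simp add: fun_eq_iff shift_env_def)

lemma shift_env_mono: "\<Gamma> \<sqsubseteq> \<Delta> \<Longrightarrow> shift_env k \<Gamma> \<sqsubseteq> shift_env k \<Delta>"
  by (simp add: env_le_def shift_env_def)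

lemma shift_env_Suc_env_ext: "shift_env (Suc k) (env_ext M \<Gamma>) = env_ext M (shift_env k \<Gamma>)"
  by (simp add: fun_eq_iff shift_env_def env_ext_def split: nat.split)

lemma drop_env_add: "drop_env k (\<Gamma> + \<Delta>) = drop_env k \<Gamma> + drop_env k \<Delta>"
  by (simp add: fun_eq_iff drop_env_def)

lemma drop_env_mono: "\<Gamma> \<sqsubseteq> \<Delta> \<Longrightarrow> drop_env k \<Gamma> \<sqsubseteq> drop_env k \<Delta>"
  by (simp add: env_le_def drop_env_def)

lemma drop_env_Suc_env_ext: "drop_env (Suc k) (env_ext M \<Gamma>) = env_ext M (drop_env k \<Gamma>)"
  by (simp add: fun_eq_iff drop_env_def env_ext_def split: nat.split)

lemma drop_env_0_env_ext [simp]: "drop_env 0 (env_ext M \<Gamma>) = \<Gamma>"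
  by (simp add: fun_eq_iff drop_env_def)

subsection \<open>The affine variant of the type system\<close>

text \<open>Induction over the typing rules produces eta-expanded sums of environments, which
  this rule would unfold pointwise, so it is only used explicitly from here on.\<close>
declare plus_fun_apply [simp del]

inductive wtyping :: "env \<Rightarrow> trm \<Rightarrow> ty \<Rightarrow> nat \<Rightarrow> bool"
  and wmtyping :: "env \<Rightarrow> trm \<Rightarrow> ty multiset \<Rightarrow> nat \<Rightarrow> bool" where
  wvar: "\<sigma> \<in># \<Gamma> x \<Longrightarrow> wtyping \<Gamma> (Var x) \<sigma> 1"
| wabs: "wtyping (env_ext M \<Gamma>) t \<sigma> k \<Longrightarrow> wtyping \<Gamma> (Lam t) (Arr M \<sigma>) (Suc k)"
| wmany_empty: "wmtyping \<Gamma> t {#} 0"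
| wmany_add: "wtyping \<Gamma> t \<sigma> k \<Longrightarrow> wmtyping \<Delta> t M m \<Longrightarrow> \<Gamma> + \<Delta> \<sqsubseteq> \<Theta> \<Longrightarrow>
    wmtyping \<Theta> t (add_mset \<sigma> M) (k + m)"
| wapp: "wmtyping \<Gamma> t (ch (image_mset (\<lambda>(M, \<tau>). Arr M \<tau>) A) \<tau>0) k1 \<Longrightarrow>
    wmtyping \<Delta> u (ch (sum_mset (image_mset fst A)) \<tau>1) k2 \<Longrightarrow>
    wtyping (env_ext (image_mset snd A) \<Lambda>) r \<sigma> k3 \<Longrightarrow> \<Gamma> + \<Delta> + \<Lambda> \<sqsubseteq> \<Theta> \<Longrightarrow>
    wtyping \<Theta> (App t u r) \<sigma> (Suc (k1 + k2 + k3))"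

inductive_cases wtyping_LamE: "wtyping \<Gamma> (Lam t) \<sigma> k"
inductive_cases wtyping_AppE: "wtyping \<Gamma> (App t u r) \<sigma> k"

lemma wmtyping_singleton: "wtyping \<Gamma> t \<sigma> k \<Longrightarrow> wmtyping \<Gamma> t {#\<sigma>#} k"
  using wmany_add[OF _ wmany_empty, of \<Gamma> t \<sigma> k 0 \<Gamma>] by simp

lemma typing_imp_wtyping:
  shows "typing \<Gamma> t \<sigma> k \<Longrightarrow> wtyping \<Gamma> t \<sigma> k"
    and "mtyping \<Gamma> t M k \<Longrightarrow> wmtyping \<Gamma> t M k"
proof (induction rule: typing_mtyping.inducts)
  case (var x \<sigma>)
  show ?case by (rule wvar) (simp add: single_env_def)
next
  case (many_add \<Gamma> t \<sigma> k \<Delta> M m)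
  show ?case
    unfolding env_union_eq_plus by (rule wmany_add[OF many_add.IH env_le_refl])
next
  case (app \<Gamma> t A \<tau>0 k1 \<Delta> u \<tau>1 k2 \<Lambda> r \<sigma> k3)
  show ?case
    unfolding env_union_eq_plus by (rule wapp[OF app.IH env_le_refl])
qed (simp_all add: wabs wmtyping_singleton)

lemma wtyping_weaken:
  shows "wtyping \<Gamma> t \<sigma> k \<Longrightarrow> \<Gamma> \<sqsubseteq> \<Gamma>' \<Longrightarrow> wtyping \<Gamma>' t \<sigma> k"
    and "wmtyping \<Gamma> t M k \<Longrightarrow> \<Gamma> \<sqsubseteq> \<Gamma>' \<Longrightarrow> wmtyping \<Gamma>' t M k"
proof (induction arbitrary: \<Gamma>' and \<Gamma>' rule: wtyping_wmtyping.inducts)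
  case (wvar \<sigma> \<Gamma> x)
  then show ?case by (metis env_le_def mset_subset_eqD wtyping_wmtyping.wvar)
qed (blast intro: wtyping_wmtyping.intros env_ext_mono env_le_trans)+

lemma wtyping_size_pos: "wtyping \<Gamma> t \<sigma> k \<Longrightarrow> 0 < k"
  and wmtyping_size_ge: "wmtyping \<Gamma> t M k \<Longrightarrow> size M \<le> k"
  by (induction rule: wtyping_wmtyping.inducts) auto

lemma wtyping_lift:
  shows "wtyping \<Gamma> t \<sigma> k \<Longrightarrow> wtyping (shift_env j \<Gamma>) (lift j t) \<sigma> k"
    and "wmtyping \<Gamma> t M k \<Longrightarrow> wmtyping (shift_env j \<Gamma>) (lift j t) M k"
proof (induction arbitrary: j and j rule: wtyping_wmtyping.inducts)
  case (wvar \<sigma> \<Gamma> x)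
  then show ?case by (auto simp: shift_env_def intro: wtyping_wmtyping.wvar[simplified])
next
  case (wabs M \<Gamma> t \<sigma> k)
  then show ?case by (metis lift.simps(2) shift_env_Suc_env_ext wtyping_wmtyping.wabs)
next
  case (wmany_add \<Gamma> t \<sigma> k \<Delta> M m \<Theta>)
  show ?case
    by (rule wtyping_wmtyping.wmany_add[OF wmany_add.IH])
      (simp add: shift_env_mono wmany_add.hyps flip: shift_env_add)
next
  case (wapp \<Gamma> t A \<tau>0 k1 \<Delta> u \<tau>1 k2 \<Lambda> r \<sigma> k3 \<Theta>)
  have "wtyping (env_ext (image_mset snd A) (shift_env j \<Lambda>)) (lift (Suc j) r) \<sigma> k3"
    using wapp.IH(3)[of "Suc j"] by (simp add: shift_env_Suc_env_ext)
  moreover have "shift_env j \<Gamma> + shift_env j \<Delta> + shift_env j \<Lambda> \<sqsubseteq> shift_env j \<Theta>"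
    using shift_env_mono[OF wapp.hyps(4)] by (simp add: shift_env_add)
  ultimately show ?case
    using wtyping_wmtyping.wapp[OF wapp.IH(1,2)] by simp
qed (auto intro: wtyping_wmtyping.intros shift_env_mono simp flip: shift_env_add)

lemma size_ch_pos: "0 < size (ch M \<tau>)"
  by (simp add: ch_def nonempty_has_size)

lemma wmtyping_of_ch: "wmtyping \<Gamma> t (ch M \<tau>) k \<Longrightarrow> \<exists>k'\<le>k. wmtyping \<Gamma> t M k'"
  by (cases "M = {#}") (auto simp: ch_def intro: wmany_empty)

lemma wmtyping_add_mset_inv:
  assumes "wmtyping \<Theta> t (add_mset \<sigma> M) k"
  shows "\<exists>\<Gamma> \<Delta> k1 k2. wtyping \<Gamma> t \<sigma> k1 \<and> wmtyping \<Delta> t M k2 \<and> \<Gamma> + \<Delta> \<sqsubseteq> \<Theta> \<and> k = k1 + k2"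
  using assms
proof (induction "size M" arbitrary: \<Theta> k \<sigma> M rule: less_induct)
  case less
  from less.prems obtain \<Gamma> \<Delta> \<sigma>' M' k1 k2 where
    head: "wtyping \<Gamma> t \<sigma>' k1" and tail: "wmtyping \<Delta> t M' k2"
    and env: "\<Gamma> + \<Delta> \<sqsubseteq> \<Theta>" and k: "k = k1 + k2" and eq: "add_mset \<sigma>' M' = add_mset \<sigma> M"
    by (cases rule: wmtyping.cases) auto
  show ?case
  proof (cases "\<sigma>' = \<sigma>")
    case True
    with head tail env k eq show ?thesis by auto
  next
    case False
    then obtain K where M: "M = add_mset \<sigma>' K" and M': "M' = add_mset \<sigma> K"
      using eq by (metis add_eq_conv_ex)
    obtain \<Gamma>' \<Delta>' l1 l2 where
      "wtyping \<Gamma>' t \<sigma> l1" "wmtyping \<Delta>' t K l2" and env': "\<Gamma>' + \<Delta>' \<sqsubseteq> \<Delta>" and "k2 = l1 + l2"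
      using less.hyps[of K \<Delta> \<sigma> k2] tail M M' by auto
    moreover have "wmtyping (\<Gamma> + \<Delta>') t M (k1 + l2)"
      using wmany_add[OF head \<open>wmtyping \<Delta>' t K l2\<close> env_le_refl] M by simp
    moreover have "\<Gamma>' + (\<Gamma> + \<Delta>') \<sqsubseteq> \<Theta>"
      using env_le_add_trans[OF env' env] by (simp add: ac_simps)
    ultimately show ?thesis using k by (metis add.left_commute)
  qed
qed

lemma wmtyping_split:
  assumes "wmtyping \<Theta> t (A + B) k"
  shows "\<exists>\<Gamma> \<Delta> k1 k2. wmtyping \<Gamma> t A k1 \<and> wmtyping \<Delta> t B k2 \<and> \<Gamma> + \<Delta> \<sqsubseteq> \<Theta> \<and> k = k1 + k2"
  using assms
proof (induction A arbitrary: \<Theta> k)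
  case empty
  then show ?case using wmany_empty[of 0] by fastforce
next
  case (add \<sigma> A)
  obtain \<Gamma> \<Delta> k1 k2 where
    head: "wtyping \<Gamma> t \<sigma> k1" and "wmtyping \<Delta> t (A + B) k2" and env: "\<Gamma> + \<Delta> \<sqsubseteq> \<Theta>" and "k = k1 + k2"
    using wmtyping_add_mset_inv[of \<Theta> t \<sigma> "A + B" k] add.prems by auto
  moreover obtain \<Gamma>' \<Delta>' l1 l2 where
    "wmtyping \<Gamma>' t A l1" "wmtyping \<Delta>' t B l2" and env': "\<Gamma>' + \<Delta>' \<sqsubseteq> \<Delta>" and "k2 = l1 + l2"
    using add.IH[OF \<open>wmtyping \<Delta> t (A + B) k2\<close>] by blast
  moreover have "\<Gamma> + \<Gamma>' + \<Delta>' \<sqsubseteq> \<Theta>"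
    using env_le_add_trans[OF env' env] by (simp add: ac_simps)
  ultimately show ?case
    using wmany_add[OF head \<open>wmtyping \<Gamma>' t A l1\<close> env_le_refl] by (metis add.assoc)
qed

lemma wmtyping_split_submset:
  assumes "wmtyping \<Psi> t M m" and "A + B \<subseteq># M"
  shows "\<exists>\<Psi>1 \<Psi>2 m1 m2. wmtyping \<Psi>1 t A m1 \<and> wmtyping \<Psi>2 t B m2 \<and> \<Psi>1 + \<Psi>2 \<sqsubseteq> \<Psi> \<and>
           m1 + m2 + size M \<le> m + size A + size B"
proof -
  obtain Y where M: "M = A + B + Y"
    using assms(2) by (metis subset_mset.le_iff_add)
  then obtain \<Psi>' \<Psi>3 m' m3 where
    AB: "wmtyping \<Psi>' t (A + B) m'" and Y: "wmtyping \<Psi>3 t Y m3"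
    and env': "\<Psi>' + \<Psi>3 \<sqsubseteq> \<Psi>" and m: "m = m' + m3"
    using wmtyping_split assms(1) by blast
  obtain \<Psi>1 \<Psi>2 m1 m2 where
    "wmtyping \<Psi>1 t A m1" "wmtyping \<Psi>2 t B m2" and env: "\<Psi>1 + \<Psi>2 \<sqsubseteq> \<Psi>'" and "m' = m1 + m2"
    using wmtyping_split[OF AB] by blast
  moreover have "\<Psi>1 + \<Psi>2 \<sqsubseteq> \<Psi>"
    using env env' by (meson env_le_add_leftD env_le_trans)
  moreover have "size Y \<le> m3"
    using Y by (rule wmtyping_size_ge)
  ultimately show ?thesis
    using M m by (intro exI[of _ \<Psi>1] exI[of _ \<Psi>2] exI[of _ m1] exI[of _ m2]) simp
qed

lemma wmtyping_split3_submset: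
  assumes "wmtyping \<Psi> t M m" and "A + B + C \<subseteq># M"
  shows "\<exists>\<Psi>1 \<Psi>2 \<Psi>3 m1 m2 m3. wmtyping \<Psi>1 t A m1 \<and> wmtyping \<Psi>2 t B m2 \<and> wmtyping \<Psi>3 t C m3 \<and>
           \<Psi>1 + \<Psi>2 + \<Psi>3 \<sqsubseteq> \<Psi> \<and> m1 + m2 + m3 + size M \<le> m + size A + size B + size C"
proof -
  obtain \<Psi>' \<Psi>3 m' m3 where
    AB: "wmtyping \<Psi>' t (A + B) m'" and "wmtyping \<Psi>3 t C m3" and env': "\<Psi>' + \<Psi>3 \<sqsubseteq> \<Psi>"
    and "m' + m3 + size M \<le> m + size (A + B) + size C"
    using wmtyping_split_submset[OF assms] by blast
  moreover obtain \<Psi>1 \<Psi>2 m1 m2 where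
    "wmtyping \<Psi>1 t A m1" "wmtyping \<Psi>2 t B m2" and env: "\<Psi>1 + \<Psi>2 \<sqsubseteq> \<Psi>'" and "m' = m1 + m2"
    using wmtyping_split[OF AB] by blast
  moreover have "\<Psi>1 + \<Psi>2 + \<Psi>3 \<sqsubseteq> \<Psi>"
    using env_le_add_mono[OF env env_le_refl] env' by (rule env_le_trans)
  ultimately show ?thesis
    by (intro exI[of _ \<Psi>1] exI[of _ \<Psi>2] exI[of _ \<Psi>3] exI[of _ m1] exI[of _ m2] exI[of _ m3]) simp
qed

subsection \<open>Substitution\<close>

lemma wtyping_subst_Var:
  assumes "\<sigma> \<in># \<Gamma> x" and "wmtyping \<Psi> u (\<Gamma> j) m"
  shows "\<exists>n'. wtyping (drop_env j \<Gamma> + \<Psi>) (subst (Var x) j u) \<sigma> n' \<and> n' + size (\<Gamma> j) \<le> 1 + m"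
proof -
  have size_le: "size (\<Gamma> j) \<le> m"
    using assms(2) by (rule wmtyping_size_ge)
  consider "x < j" | "j < x" | "x = j" by linarith
  then show ?thesis
  proof cases
    case 1
    then have "subst (Var x) j u = Var x"
      by simp
    moreover have "wtyping (drop_env j \<Gamma> + \<Psi>) (Var x) \<sigma> 1"
      by (rule wtyping_wmtyping.wvar) (simp add: plus_fun_apply drop_env_def 1 assms(1))
    ultimately show ?thesis
      using size_le by (intro exI[of _ 1]) (simp del: subst.simps)
  next
    case 2
    then have "subst (Var x) j u = Var (x - 1)"
      by simp
    moreover have "\<sigma> \<in># drop_env j \<Gamma> (x - 1)"
      using 2 assms(1) by (cases x) (simp_all add: drop_env_def)
    then have "wtyping (drop_env j \<Gamma> + \<Psi>) (Var (x - 1)) \<sigma> 1"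
      by (intro wtyping_wmtyping.wvar) (simp add: plus_fun_apply)
    ultimately show ?thesis
      using size_le by (intro exI[of _ 1]) (simp del: subst.simps)
  next
    case 3
    then have "subst (Var x) j u = u"
      by simp
    obtain R where R: "\<Gamma> j = add_mset \<sigma> R"
      using 3 assms(1) by (metis multi_member_split)
    then obtain \<Psi>1 \<Psi>2 l1 l2 where
      "wtyping \<Psi>1 u \<sigma> l1" "wmtyping \<Psi>2 u R l2" "\<Psi>1 + \<Psi>2 \<sqsubseteq> \<Psi>" "m = l1 + l2"
      using wmtyping_add_mset_inv assms(2) by metis
    moreover have "\<Psi>1 \<sqsubseteq> drop_env j \<Gamma> + \<Psi>"
      using calculation(3) by (meson env_le_add_leftD env_le_add_right env_le_trans)
    ultimately show ?thesis
      using \<open>subst (Var x) j u = u\<close> R wmtyping_size_ge[of \<Psi>2 u R l2] wtyping_weaken(1)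
      by (intro exI[of _ l1]) (simp del: subst.simps)
  qed
qed

lemma wtyping_subst:
  shows "wtyping \<Gamma> t \<sigma> n \<Longrightarrow> wmtyping \<Psi> u (\<Gamma> j) m \<Longrightarrow>
      \<exists>n'. wtyping (drop_env j \<Gamma> + \<Psi>) (subst t j u) \<sigma> n' \<and> n' + size (\<Gamma> j) \<le> n + m"
    and "wmtyping \<Gamma> t N n \<Longrightarrow> wmtyping \<Psi> u (\<Gamma> j) m \<Longrightarrow>
      \<exists>n'. wmtyping (drop_env j \<Gamma> + \<Psi>) (subst t j u) N n' \<and> n' + size (\<Gamma> j) \<le> n + m"
proof (induction arbitrary: j \<Psi> u m and j \<Psi> u m rule: wtyping_wmtyping.inducts)
  case (wvar \<sigma> \<Gamma> x)
  from wvar.hyps wvar.prems show ?case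
    by (rule wtyping_subst_Var)
next
  case (wabs M \<Gamma> t \<sigma> k)
  have "wmtyping (shift_env 0 \<Psi>) (lift 0 u) (env_ext M \<Gamma> (Suc j)) m"
    using wtyping_lift(2)[OF wabs.prems] by simp
  then obtain n' where
    "wtyping (drop_env (Suc j) (env_ext M \<Gamma>) + shift_env 0 \<Psi>) (subst t (Suc j) (lift 0 u)) \<sigma> n'"
    "n' + size (\<Gamma> j) \<le> k + m"
    using wabs.IH by fastforce
  then show ?case
    by (intro exI[of _ "Suc n'"])
      (simp add: wtyping_wmtyping.wabs drop_env_Suc_env_ext env_ext_add_shift_env_0)
next
  case (wmany_empty \<Gamma> t)
  then show ?case
    by (intro exI[of _ 0]) (simp add: wmtyping_size_ge wtyping_wmtyping.wmany_empty)
next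
  case (wmany_add \<Gamma> t \<sigma> k \<Delta> M k' \<Theta>)
  have "\<Gamma> j + \<Delta> j \<subseteq># \<Theta> j"
    using env_leD[OF wmany_add.hyps(3)] by (simp add: plus_fun_apply)
  then obtain \<Psi>1 \<Psi>2 m1 m2 where
    u1: "wmtyping \<Psi>1 u (\<Gamma> j) m1" and u2: "wmtyping \<Psi>2 u (\<Delta> j) m2" and env: "\<Psi>1 + \<Psi>2 \<sqsubseteq> \<Psi>"
    and m: "m1 + m2 + size (\<Theta> j) \<le> m + size (\<Gamma> j) + size (\<Delta> j)"
    using wmtyping_split_submset[OF wmany_add.prems] by blast
  obtain n1 where
    t1: "wtyping (drop_env j \<Gamma> + \<Psi>1) (subst t j u) \<sigma> n1" and n1: "n1 + size (\<Gamma> j) \<le> k + m1"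
    using wmany_add.IH(1)[OF u1] by blast
  obtain n2 where
    t2: "wmtyping (drop_env j \<Delta> + \<Psi>2) (subst t j u) M n2" and n2: "n2 + size (\<Delta> j) \<le> k' + m2"
    using wmany_add.IH(2)[OF u2] by blast
  have "drop_env j \<Gamma> + \<Psi>1 + (drop_env j \<Delta> + \<Psi>2) \<sqsubseteq> drop_env j \<Theta> + \<Psi>"
    using env_le_add_mono[OF drop_env_mono[OF wmany_add.hyps(3)] env]
    by (simp add: drop_env_add ac_simps)
  with t1 t2 have "wmtyping (drop_env j \<Theta> + \<Psi>) (subst t j u) (add_mset \<sigma> M) (n1 + n2)"
    by (rule wtyping_wmtyping.wmany_add)
  then show ?case
    using m n1 n2 by (intro exI[of _ "n1 + n2"]) simp
next
  case (wapp \<Gamma> t A \<tau>0 k1 \<Delta> v \<tau>1 k2 \<Lambda> r \<sigma> k3 \<Theta>)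
  have "\<Gamma> j + \<Delta> j + \<Lambda> j \<subseteq># \<Theta> j"
    using env_leD[OF wapp.hyps(4)] by (simp add: plus_fun_apply)
  then obtain \<Psi>1 \<Psi>2 \<Psi>3 m1 m2 m3 where
    u1: "wmtyping \<Psi>1 u (\<Gamma> j) m1" and u2: "wmtyping \<Psi>2 u (\<Delta> j) m2"
    and u3: "wmtyping \<Psi>3 u (\<Lambda> j) m3" and env: "\<Psi>1 + \<Psi>2 + \<Psi>3 \<sqsubseteq> \<Psi>"
    and m: "m1 + m2 + m3 + size (\<Theta> j) \<le> m + size (\<Gamma> j) + size (\<Delta> j) + size (\<Lambda> j)"
    using wmtyping_split3_submset[OF wapp.prems] by blast
  obtain n1 where
    t1: "wmtyping (drop_env j \<Gamma> + \<Psi>1) (subst t j u) (ch (image_mset (\<lambda>(M, \<tau>). Arr M \<tau>) A) \<tau>0) n1"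
    and n1: "n1 + size (\<Gamma> j) \<le> k1 + m1"
    using wapp.IH(1)[OF u1] by blast
  obtain n2 where
    t2: "wmtyping (drop_env j \<Delta> + \<Psi>2) (subst v j u) (ch (sum_mset (image_mset fst A)) \<tau>1) n2"
    and n2: "n2 + size (\<Delta> j) \<le> k2 + m2"
    using wapp.IH(2)[OF u2] by blast
  have "wmtyping (shift_env 0 \<Psi>3) (lift 0 u) (env_ext (image_mset snd A) \<Lambda> (Suc j)) m3"
    using wtyping_lift(2)[OF u3] by simp
  then obtain n3 where
    "wtyping (drop_env (Suc j) (env_ext (image_mset snd A) \<Lambda>) + shift_env 0 \<Psi>3)
      (subst r (Suc j) (lift 0 u)) \<sigma> n3"
    and n3: "n3 + size (\<Lambda> j) \<le> k3 + m3"
    using wapp.IH(3) by fastforce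
  then have t3: "wtyping (env_ext (image_mset snd A) (drop_env j \<Lambda> + \<Psi>3))
      (subst r (Suc j) (lift 0 u)) \<sigma> n3"
    by (simp add: drop_env_Suc_env_ext env_ext_add_shift_env_0)
  have "drop_env j \<Gamma> + \<Psi>1 + (drop_env j \<Delta> + \<Psi>2) + (drop_env j \<Lambda> + \<Psi>3) \<sqsubseteq> drop_env j \<Theta> + \<Psi>"
    using env_le_add_mono[OF drop_env_mono[OF wapp.hyps(4)] env]
    by (simp add: drop_env_add ac_simps)
  with t1 t2 t3 have "wtyping (drop_env j \<Theta> + \<Psi>) (subst (App t v r) j u) \<sigma> (Suc (n1 + n2 + n3))"
    by (simp add: wtyping_wmtyping.wapp)
  then show ?case
    using m n1 n2 n3 by (intro exI[of _ "Suc (n1 + n2 + n3)"]) simp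
qed

lemma wtyping_plug_subst:
  assumes "wtyping \<Gamma> (plug D (Lam t)) (Arr M \<tau>) k" and "wmtyping \<Psi> u M m"
  shows "\<exists>k'. wtyping (\<Gamma> + \<Psi>) (plug D (subst t 0 ((lift 0 ^^ depth D) u))) \<tau> k' \<and>
    k' + 1 + size M \<le> k + m"
  using assms
proof (induction D arbitrary: \<Gamma> k \<Psi> u)
  case Hole
  then obtain k0 where "wtyping (env_ext M \<Gamma>) t \<tau> k0" and "k = Suc k0"
    by (auto elim: wtyping_LamE)
  with Hole.prems(2) show ?case
    using wtyping_subst(1)[of "env_ext M \<Gamma>" t \<tau> k0 \<Psi> u 0 m] by auto
next
  case (CApp s v D)
  from CApp.prems(1) obtain \<Gamma>' \<Delta> \<Lambda> A \<tau>0 \<tau>1 k1 k2 k3 where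
    s: "wmtyping \<Gamma>' s (ch (image_mset (\<lambda>(M, \<tau>). Arr M \<tau>) A) \<tau>0) k1"
    and v: "wmtyping \<Delta> v (ch (sum_mset (image_mset fst A)) \<tau>1) k2"
    and D: "wtyping (env_ext (image_mset snd A) \<Lambda>) (plug D (Lam t)) (Arr M \<tau>) k3"
    and env: "\<Gamma>' + \<Delta> + \<Lambda> \<sqsubseteq> \<Gamma>" and k: "k = Suc (k1 + k2 + k3)"
    by (auto elim!: wtyping_AppE)
  obtain k' where
    "wtyping (env_ext (image_mset snd A) \<Lambda> + shift_env 0 \<Psi>)
      (plug D (subst t 0 ((lift 0 ^^ depth D) (lift 0 u)))) \<tau> k'"
    and k': "k' + 1 + size M \<le> k3 + m"
    using CApp.IH[OF D wtyping_lift(2)[OF CApp.prems(2)]] by blast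
  then have "wtyping (env_ext (image_mset snd A) (\<Lambda> + \<Psi>))
      (plug D (subst t 0 ((lift 0 ^^ depth D) (lift 0 u)))) \<tau> k'"
    by (simp add: env_ext_add_shift_env_0)
  moreover have "\<Gamma>' + \<Delta> + (\<Lambda> + \<Psi>) \<sqsubseteq> \<Gamma> + \<Psi>"
    using env_le_add_mono[OF env env_le_refl[of \<Psi>]] by (simp add: ac_simps)
  moreover have "(lift 0 ^^ depth (CApp s v D)) u = (lift 0 ^^ depth D) (lift 0 u)"
    by (simp add: funpow_swap1)
  ultimately show ?case
    using wtyping_wmtyping.wapp[OF s v] k k' by (intro exI[of _ "Suc (k1 + k2 + k')"]) simp
qed

lemma wmtyping_plug_subst:
  assumes "wmtyping \<Gamma> (plug D (Lam t)) (image_mset (\<lambda>(M, \<tau>). Arr M \<tau>) A) k"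
    and "wmtyping \<Psi> u (sum_mset (image_mset fst A)) m"
  shows "\<exists>k'. wmtyping (\<Gamma> + \<Psi>) (plug D (subst t 0 ((lift 0 ^^ depth D) u))) (image_mset snd A) k' \<and>
    k' + size A + size (sum_mset (image_mset fst A)) \<le> k + m"
  using assms
proof (induction A arbitrary: \<Gamma> k \<Psi> m)
  case empty
  then show ?case
    by (intro exI[of _ 0]) (simp add: wtyping_wmtyping.wmany_empty)
next
  case (add a A)
  obtain M \<tau> where a: "a = (M, \<tau>)"
    by fastforce
  obtain \<Gamma>1 \<Gamma>2 k1 k2 where
    head: "wtyping \<Gamma>1 (plug D (Lam t)) (Arr M \<tau>) k1"
    and tail: "wmtyping \<Gamma>2 (plug D (Lam t)) (image_mset (\<lambda>(M, \<tau>). Arr M \<tau>) A) k2"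
    and env: "\<Gamma>1 + \<Gamma>2 \<sqsubseteq> \<Gamma>" and k: "k = k1 + k2"
    using wmtyping_add_mset_inv add.prems(1) a by fastforce
  obtain \<Psi>1 \<Psi>2 m1 m2 where
    u1: "wmtyping \<Psi>1 u M m1" and u2: "wmtyping \<Psi>2 u (sum_mset (image_mset fst A)) m2"
    and env': "\<Psi>1 + \<Psi>2 \<sqsubseteq> \<Psi>" and m: "m = m1 + m2"
    using wmtyping_split add.prems(2) a by fastforce
  obtain n1 where
    t1: "wtyping (\<Gamma>1 + \<Psi>1) (plug D (subst t 0 ((lift 0 ^^ depth D) u))) \<tau> n1"
    and n1: "n1 + 1 + size M \<le> k1 + m1"
    using wtyping_plug_subst[OF head u1] by blast
  obtain n2 where
    t2: "wmtyping (\<Gamma>2 + \<Psi>2) (plug D (subst t 0 ((lift 0 ^^ depth D) u))) (image_mset snd A) n2"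
    and n2: "n2 + size A + size (sum_mset (image_mset fst A)) \<le> k2 + m2"
    using add.IH[OF tail u2] by blast
  have "\<Gamma>1 + \<Psi>1 + (\<Gamma>2 + \<Psi>2) \<sqsubseteq> \<Gamma> + \<Psi>"
    using env_le_add_mono[OF env env'] by (simp add: ac_simps)
  with t1 t2 show ?case
    using a k m n1 n2 by (intro exI[of _ "n1 + n2"]) (simp add: wtyping_wmtyping.wmany_add)
qed

subsection \<open>Subject reduction\<close>

lemma wtyping_dbeta_root:
  assumes "wtyping \<Theta> (App (plug D (Lam t)) u r) \<sigma> k"
  shows "\<exists>k'<k. wtyping \<Theta> (subst r 0 (plug D (subst t 0 ((lift 0 ^^ depth D) u)))) \<sigma> k'"
proof -
  from assms obtain \<Gamma> \<Delta> \<Lambda> A \<tau>0 \<tau>1 k1 k2 k3 where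
    f: "wmtyping \<Gamma> (plug D (Lam t)) (ch (image_mset (\<lambda>(M, \<tau>). Arr M \<tau>) A) \<tau>0) k1"
    and a: "wmtyping \<Delta> u (ch (sum_mset (image_mset fst A)) \<tau>1) k2"
    and r: "wtyping (env_ext (image_mset snd A) \<Lambda>) r \<sigma> k3"
    and env: "\<Gamma> + \<Delta> + \<Lambda> \<sqsubseteq> \<Theta>" and k: "k = Suc (k1 + k2 + k3)"
    by (auto elim!: wtyping_AppE)
  obtain k1' k2' where
    "wmtyping \<Gamma> (plug D (Lam t)) (image_mset (\<lambda>(M, \<tau>). Arr M \<tau>) A) k1'" "k1' \<le> k1"
    "wmtyping \<Delta> u (sum_mset (image_mset fst A)) k2'" "k2' \<le> k2"
    using wmtyping_of_ch f a by meson
  then obtain n where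
    "wmtyping (\<Gamma> + \<Delta>) (plug D (subst t 0 ((lift 0 ^^ depth D) u))) (image_mset snd A) n"
    and n: "n + size A \<le> k1 + k2"
    using wmtyping_plug_subst by fastforce
  then obtain k' where
    "wtyping (\<Lambda> + (\<Gamma> + \<Delta>)) (subst r 0 (plug D (subst t 0 ((lift 0 ^^ depth D) u)))) \<sigma> k'"
    and "k' + size A \<le> k3 + n"
    using wtyping_subst(1)[OF r, of "\<Gamma> + \<Delta>" _ 0 n] by auto
  moreover have "\<Lambda> + (\<Gamma> + \<Delta>) \<sqsubseteq> \<Theta>"
    using env by (simp add: ac_simps)
  ultimately show ?thesis
    using k n by (intro exI[of _ k']) (simp add: wtyping_weaken(1))
qed

definition size_decreasing :: "trm \<Rightarrow> trm \<Rightarrow> bool" where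
  "size_decreasing t t' \<longleftrightarrow> (\<forall>\<Gamma> \<sigma> k. wtyping \<Gamma> t \<sigma> k \<longrightarrow> (\<exists>k'<k. wtyping \<Gamma> t' \<sigma> k'))"

lemma wmtyping_size_decreasing:
  assumes "size_decreasing t t'" and "wmtyping \<Theta> t M k"
  shows "\<exists>k'. wmtyping \<Theta> t' M k' \<and> k' + size M \<le> k"
  using assms(2)
proof (induction M arbitrary: \<Theta> k)
  case empty
  then show ?case
    using wtyping_wmtyping.wmany_empty by auto
next
  case (add \<sigma> M)
  then obtain \<Gamma> \<Delta> k1 k2 where
    "wtyping \<Gamma> t \<sigma> k1" "wmtyping \<Delta> t M k2" "\<Gamma> + \<Delta> \<sqsubseteq> \<Theta>" "k = k1 + k2"
    using wmtyping_add_mset_inv by blast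
  then show ?case
    using assms(1) add.IH unfolding size_decreasing_def
    by (fastforce intro: wtyping_wmtyping.wmany_add)
qed

lemma wmtyping_ch_size_decreasing:
  assumes "size_decreasing t t'" and "wmtyping \<Theta> t (ch M \<tau>) k"
  shows "\<exists>k'<k. wmtyping \<Theta> t' (ch M \<tau>) k'"
proof -
  obtain k' where "wmtyping \<Theta> t' (ch M \<tau>) k'" "k' + size (ch M \<tau>) \<le> k"
    using wmtyping_size_decreasing[OF assms] by blast
  moreover have "0 < size (ch M \<tau>)"
    by (rule size_ch_pos)
  ultimately show ?thesis
    by (intro exI[of _ k']) simp
qed

lemma size_decreasing_dbeta_root:
  "size_decreasing (App (plug D (Lam t)) u r) (subst r 0 (plug D (subst t 0 ((lift 0 ^^ depth D) u))))"
  unfolding size_decreasing_def using wtyping_dbeta_root by blast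

lemma size_decreasing_Lam:
  assumes "size_decreasing t t'"
  shows "size_decreasing (Lam t) (Lam t')"
  unfolding size_decreasing_def
proof (intro allI impI)
  fix \<Gamma> \<sigma> k
  assume "wtyping \<Gamma> (Lam t) \<sigma> k"
  then obtain M \<tau> k0 where \<sigma>: "\<sigma> = Arr M \<tau>" and t: "wtyping (env_ext M \<Gamma>) t \<tau> k0" and k: "k = Suc k0"
    by (auto elim: wtyping_LamE)
  obtain k0' where "k0' < k0" "wtyping (env_ext M \<Gamma>) t' \<tau> k0'"
    using assms t unfolding size_decreasing_def by blast
  with \<sigma> k show "\<exists>k'<k. wtyping \<Gamma> (Lam t') \<sigma> k'"
    by (intro exI[of _ "Suc k0'"]) (simp add: wtyping_wmtyping.wabs)
qed

lemma size_decreasing_App1: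
  assumes "size_decreasing t t'"
  shows "size_decreasing (App t u r) (App t' u r)"
  unfolding size_decreasing_def
proof (intro allI impI)
  fix \<Gamma> \<sigma> k
  assume "wtyping \<Gamma> (App t u r) \<sigma> k"
  then obtain \<Gamma>' \<Delta> \<Lambda> A \<tau>0 \<tau>1 k1 k2 k3 where
    t: "wmtyping \<Gamma>' t (ch (image_mset (\<lambda>(M, \<tau>). Arr M \<tau>) A) \<tau>0) k1"
    and u: "wmtyping \<Delta> u (ch (sum_mset (image_mset fst A)) \<tau>1) k2"
    and r: "wtyping (env_ext (image_mset snd A) \<Lambda>) r \<sigma> k3"
    and env: "\<Gamma>' + \<Delta> + \<Lambda> \<sqsubseteq> \<Gamma>" and k: "k = Suc (k1 + k2 + k3)"
    by (auto elim!: wtyping_AppE)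
  obtain k1' where "wmtyping \<Gamma>' t' (ch (image_mset (\<lambda>(M, \<tau>). Arr M \<tau>) A) \<tau>0) k1'" "k1' < k1"
    using wmtyping_ch_size_decreasing[OF assms t] by blast
  with k show "\<exists>k'<k. wtyping \<Gamma> (App t' u r) \<sigma> k'"
    using wtyping_wmtyping.wapp[OF _ u r env] by (intro exI[of _ "Suc (k1' + k2 + k3)"]) simp
qed

lemma size_decreasing_App2:
  assumes "size_decreasing u u'"
  shows "size_decreasing (App t u r) (App t u' r)"
  unfolding size_decreasing_def
proof (intro allI impI)
  fix \<Gamma> \<sigma> k
  assume "wtyping \<Gamma> (App t u r) \<sigma> k"
  then obtain \<Gamma>' \<Delta> \<Lambda> A \<tau>0 \<tau>1 k1 k2 k3 where
    t: "wmtyping \<Gamma>' t (ch (image_mset (\<lambda>(M, \<tau>). Arr M \<tau>) A) \<tau>0) k1"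
    and u: "wmtyping \<Delta> u (ch (sum_mset (image_mset fst A)) \<tau>1) k2"
    and r: "wtyping (env_ext (image_mset snd A) \<Lambda>) r \<sigma> k3"
    and env: "\<Gamma>' + \<Delta> + \<Lambda> \<sqsubseteq> \<Gamma>" and k: "k = Suc (k1 + k2 + k3)"
    by (auto elim!: wtyping_AppE)
  obtain k2' where "wmtyping \<Delta> u' (ch (sum_mset (image_mset fst A)) \<tau>1) k2'" "k2' < k2"
    using wmtyping_ch_size_decreasing[OF assms u] by blast
  with k show "\<exists>k'<k. wtyping \<Gamma> (App t u' r) \<sigma> k'"
    using wtyping_wmtyping.wapp[OF t _ r env] by (intro exI[of _ "Suc (k1 + k2' + k3)"]) simp
qed

lemma size_decreasing_App3:
  assumes "size_decreasing r r'"
  shows "size_decreasing (App t u r) (App t u r')"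
  unfolding size_decreasing_def
proof (intro allI impI)
  fix \<Gamma> \<sigma> k
  assume "wtyping \<Gamma> (App t u r) \<sigma> k"
  then obtain \<Gamma>' \<Delta> \<Lambda> A \<tau>0 \<tau>1 k1 k2 k3 where
    t: "wmtyping \<Gamma>' t (ch (image_mset (\<lambda>(M, \<tau>). Arr M \<tau>) A) \<tau>0) k1"
    and u: "wmtyping \<Delta> u (ch (sum_mset (image_mset fst A)) \<tau>1) k2"
    and r: "wtyping (env_ext (image_mset snd A) \<Lambda>) r \<sigma> k3"
    and env: "\<Gamma>' + \<Delta> + \<Lambda> \<sqsubseteq> \<Gamma>" and k: "k = Suc (k1 + k2 + k3)"
    by (auto elim!: wtyping_AppE)
  obtain k3' where "wtyping (env_ext (image_mset snd A) \<Lambda>) r' \<sigma> k3'" "k3' < k3"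
    using assms r unfolding size_decreasing_def by blast
  with k show "\<exists>k'<k. wtyping \<Gamma> (App t u r') \<sigma> k'"
    using wtyping_wmtyping.wapp[OF t u _ env] by (intro exI[of _ "Suc (k1 + k2 + k3')"]) simp
qed

lemma size_decreasing_dbeta: "dbeta t t' \<Longrightarrow> size_decreasing t t'"
  by (induction rule: dbeta.induct)
    (simp_all add: size_decreasing_dbeta_root size_decreasing_Lam
      size_decreasing_App1 size_decreasing_App2 size_decreasing_App3)

lemma dbeta_relpowp_le_wtyping_size:
  assumes "(dbeta ^^ n) t t'" and "wtyping \<Gamma> t \<sigma> k"
  shows "n \<le> k"
  using assms
proof (induction n arbitrary: t k)
  case 0
  then show ?case by simp
next
  case (Suc n)
  then obtain s where "dbeta t s" "(dbeta ^^ n) s t'"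
    by (meson relpowp_Suc_D2)
  moreover obtain k' where "k' < k" "wtyping \<Gamma> s \<sigma> k'"
    using size_decreasing_dbeta[OF \<open>dbeta t s\<close>] Suc.prems(2)
    unfolding size_decreasing_def by blast
  ultimately show ?case
    using Suc.IH by fastforce
qed

lemma SN_dbetaI_bounded:
  assumes "\<And>n t'. (dbeta ^^ n) t t' \<Longrightarrow> n \<le> k"
  shows "t \<in> SN_dbeta"
  unfolding SN_dbeta_def
proof (clarify)
  fix f
  assume "t = f 0" and steps: "\<forall>i. dbeta (f i) (f (Suc i))"
  have "(dbeta ^^ n) (f 0) (f n)" for n
    by (induction n) (auto intro: relpowp_Suc_I steps[rule_format])
  then have "Suc k \<le> k"
    using assms \<open>t = f 0\<close> by blast
  then show False
    by simp
qed

lemma dnorm_le_if_bounded: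
  assumes "\<And>n t'. (dbeta ^^ n) t t' \<Longrightarrow> n \<le> k"
  shows "dnorm t \<le> enat k"
  unfolding dnorm_def using assms by (auto intro: Sup_least)

theorem mainTheorem9:
  assumes "typing \<Gamma> t \<sigma> k"
  shows "t \<in> SN_dbeta \<and> dnorm t \<le> enat k"
proof -
  have "n \<le> k" if "(dbeta ^^ n) t t'" for n t'
    using that typing_imp_wtyping(1)[OF assms] by (rule dbeta_relpowp_le_wtyping_size)
  then show ?thesis
    using SN_dbetaI_bounded dnorm_le_if_bounded by blast
qed

end
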